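(* Let $(\mathbb{X},\dagger)$ be a dagger additive category and let $\begin{bmatrix}\alpha&\beta\\ \beta^\dagger&\delta\end{bmatrix}:B\oplus C\to B\oplus C$ be a $\dagger$-positive map such that there is a map $\begin{bmatrix}\phi&\psi\end{bmatrix}:B\oplus C\to D$ with $\begin{bmatrix}\alpha&\beta\\ \beta^\dagger&\delta\end{bmatrix}=\begin{bmatrix}\phi&\psi\end{bmatrix}^\dagger\circ\begin{bmatrix}\phi&\psi\end{bmatrix}$ for which $\phi:B\to D$ has an [MP.1,3]-inverse $\phi^\bullet:D\to B$. Then $m=\psi^\dagger\circ(\phi^\bullet)^\dagger$ is a conditional generator of $\begin{bmatrix}\alpha&\beta\\ \beta^\dagger&\delta\end{bmatrix}$.
   Context: A dagger additive category is a dagger category (contravariant identity-on-objects involutive functor $\dagger$) whose hom-sets are abelian groups with bilinear composition and additive $\dagger$, having a zero object and finite biproducts whose projections $\pi_j$ and injections $\iota_j$ satisfy $\pi_j^\dagger=\iota_j$. Maps between biproducts are written as matrices; composition is matrix multiplication and $\dagger$ is transpose with entrywise $\dagger$. An endomorphism $p$ is $\dagger$-positive if $p=\chi^\dagger\circ\chi$ for some map $\chi$. An [MP.1,3]-inverse of $f:A\to B$ is a map $f^\bullet:B\to A$ with $f\circ f^\bullet\circ f=f$ and $(f\circ f^\bullet)^\dagger=f\circ f^\bullet$. A conditional generator for a $\dagger$-positive map $\begin{bmatrix}\alpha&\beta\\ \beta^\dagger&\delta\end{bmatrix}:B\oplus C\to B\oplus C$ (with $\alpha:B\to B$, $\beta:C\to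 B$, $\delta:C\to C$) is a map $m:B\to C$ with (i) $m\circ\alpha=\beta^\dagger$ and (ii) $\delta-m\circ\beta$ is $\dagger$-positive. *)

theory Defs
  imports Main
begin

text \<open>A dagger additive category, presented explicitly: objects, hom-sets, composition
  (cmp g f means g after f), identities, dagger, the abelian group structure on each
  hom-set, a zero object, and binary biproducts with projections and injections.\<close>

record ('o, 'm) dacat =
  Ob    :: "'o set"
  Hom   :: "'o \<Rightarrow> 'o \<Rightarrow> 'm set"
  cmp   :: "'m \<Rightarrow> 'm \<Rightarrow> 'm"
  idt   :: "'o \<Rightarrow> 'm"
  dag   :: "'m \<Rightarrow> 'm"
  hadd  :: "'m \<Rightarrow> 'm \<Rightarrow> 'm"
  hzero :: "'o \<Rightarrow> 'o \<Rightarrow> 'm"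
  hneg  :: "'m \<Rightarrow> 'm"
  zobj  :: "'o"
  bprod :: "'o \<Rightarrow> 'o \<Rightarrow> 'o"
  prj1  :: "'o \<Rightarrow> 'o \<Rightarrow> 'm"
  prj2  :: "'o \<Rightarrow> 'o \<Rightarrow> 'm"
  inj1  :: "'o \<Rightarrow> 'o \<Rightarrow> 'm"
  inj2  :: "'o \<Rightarrow> 'o \<Rightarrow> 'm"

definition dagger_additive_category :: "('o, 'm, 'z) dacat_scheme \<Rightarrow> bool" where
  "dagger_additive_category X \<longleftrightarrow>
    \<comment> \<open>category\<close>
    (\<forall>A B f. f \<in> Hom X A B \<longrightarrow> A \<in> Ob X \<and> B \<in> Ob X) \<and>
    (\<forall>A B A' B' f. f \<in> Hom X A B \<longrightarrow> f \<in> Hom X A' B' \<longrightarrow> A = A' \<and> B = B') \<and>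
    (\<forall>A B C f g. f \<in> Hom X A B \<longrightarrow> g \<in> Hom X B C \<longrightarrow> cmp X g f \<in> Hom X A C) \<and>
    (\<forall>A B C D f g h. f \<in> Hom X A B \<longrightarrow> g \<in> Hom X B C \<longrightarrow> h \<in> Hom X C D \<longrightarrow>
        cmp X h (cmp X g f) = cmp X (cmp X h g) f) \<and>
    (\<forall>A \<in> Ob X. idt X A \<in> Hom X A A) \<and>
    (\<forall>A B f. f \<in> Hom X A B \<longrightarrow> cmp X f (idt X A) = f \<and> cmp X (idt X B) f = f) \<and>
    \<comment> \<open>dagger: contravariant, identity on objects, involutive functor\<close>
    (\<forall>A B f. f \<in> Hom X A B \<longrightarrow> dag X f \<in> Hom X B A \<and> dag X (dag X f) = f) \<and>
    (\<forall>A \<in> Ob X. dag X (idt X A) = idt X A) \<and>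
    (\<forall>A B C f g. f \<in> Hom X A B \<longrightarrow> g \<in> Hom X B C \<longrightarrow>
        dag X (cmp X g f) = cmp X (dag X f) (dag X g)) \<and>
    \<comment> \<open>hom-sets are abelian groups\<close>
    (\<forall>A \<in> Ob X. \<forall>B \<in> Ob X. hzero X A B \<in> Hom X A B) \<and>
    (\<forall>A B f g. f \<in> Hom X A B \<longrightarrow> g \<in> Hom X A B \<longrightarrow>
        hadd X f g \<in> Hom X A B \<and> hadd X f g = hadd X g f) \<and>
    (\<forall>A B f g h. f \<in> Hom X A B \<longrightarrow> g \<in> Hom X A B \<longrightarrow> h \<in> Hom X A B \<longrightarrow>
        hadd X (hadd X f g) h = hadd X f (hadd X g h)) \<and>
    (\<forall>A B f. f \<in> Hom X A B \<longrightarrow>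
        hadd X f (hzero X A B) = f \<and> hneg X f \<in> Hom X A B \<and>
        hadd X f (hneg X f) = hzero X A B) \<and>
    \<comment> \<open>bilinear composition, additive dagger\<close>
    (\<forall>A B C f g h. f \<in> Hom X A B \<longrightarrow> g \<in> Hom X B C \<longrightarrow> h \<in> Hom X B C \<longrightarrow>
        cmp X (hadd X g h) f = hadd X (cmp X g f) (cmp X h f)) \<and>
    (\<forall>A B C f g h. f \<in> Hom X A B \<longrightarrow> g \<in> Hom X A B \<longrightarrow> h \<in> Hom X B C \<longrightarrow>
        cmp X h (hadd X f g) = hadd X (cmp X h f) (cmp X h g)) \<and>
    (\<forall>A B f g. f \<in> Hom X A B \<longrightarrow> g \<in> Hom X A B \<longrightarrow>
        dag X (hadd X f g) = hadd X (dag X f) (dag X g)) \<and>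
    \<comment> \<open>zero object\<close>
    zobj X \<in> Ob X \<and>
    (\<forall>A \<in> Ob X. Hom X A (zobj X) = {hzero X A (zobj X)} \<and>
                 Hom X (zobj X) A = {hzero X (zobj X) A}) \<and>
    \<comment> \<open>binary biproducts with dagger-compatible projections and injections\<close>
    (\<forall>A \<in> Ob X. \<forall>B \<in> Ob X.
        bprod X A B \<in> Ob X \<and>
        prj1 X A B \<in> Hom X (bprod X A B) A \<and> prj2 X A B \<in> Hom X (bprod X A B) B \<and>
        inj1 X A B \<in> Hom X A (bprod X A B) \<and> inj2 X A B \<in> Hom X B (bprod X A B) \<and>
        cmp X (prj1 X A B) (inj1 X A B) = idt X A \<and>
        cmp X (prj2 X A B) (inj2 X A B) = idt X B \<and>
        cmp X (prj1 X A B) (inj2 X A B) = hzero X B A \<and>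
        cmp X (prj2 X A B) (inj1 X A B) = hzero X A B \<and>
        hadd X (cmp X (inj1 X A B) (prj1 X A B)) (cmp X (inj2 X A B) (prj2 X A B))
          = idt X (bprod X A B) \<and>
        dag X (prj1 X A B) = inj1 X A B \<and> dag X (prj2 X A B) = inj2 X A B)"

definition row :: "('o, 'm, 'z) dacat_scheme \<Rightarrow> 'o \<Rightarrow> 'o \<Rightarrow> 'm \<Rightarrow> 'm \<Rightarrow> 'm" where
  "row X A B f g = hadd X (cmp X f (prj1 X A B)) (cmp X g (prj2 X A B))"

text \<open>2x2 matrix [[a, b], [c, d]] : A \<oplus> B \<rightarrow> C \<oplus> D with a : A \<rightarrow> C, b : B \<rightarrow> C,
  c : A \<rightarrow> D, d : B \<rightarrow> D.\<close>
definition mat22 :: "('o, 'm, 'z) dacat_scheme \<Rightarrow> 'o \<Rightarrow> 'o \<Rightarrow> 'o \<Rightarrow> 'o \<Rightarrow>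
    'm \<Rightarrow> 'm \<Rightarrow> 'm \<Rightarrow> 'm \<Rightarrow> 'm" where
  "mat22 X A B C D a b c d =
     hadd X (hadd X (cmp X (inj1 X C D) (cmp X a (prj1 X A B)))
                    (cmp X (inj1 X C D) (cmp X b (prj2 X A B))))
            (hadd X (cmp X (inj2 X C D) (cmp X c (prj1 X A B)))
                    (cmp X (inj2 X C D) (cmp X d (prj2 X A B))))"

definition dag_positive :: "('o, 'm, 'z) dacat_scheme \<Rightarrow> 'o \<Rightarrow> 'm \<Rightarrow> bool" where
  "dag_positive X A p \<longleftrightarrow> (\<exists>E \<chi>. \<chi> \<in> Hom X A E \<and> p = cmp X (dag X \<chi>) \<chi>)"

definition mp13_inverse :: "('o, 'm, 'z) dacat_scheme \<Rightarrow> 'o \<Rightarrow> 'o \<Rightarrow> 'm \<Rightarrow> 'm \<Rightarrow> bool" where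
  "mp13_inverse X A B f g \<longleftrightarrow> g \<in> Hom X B A \<and> cmp X f (cmp X g f) = f \<and>
     dag X (cmp X f g) = cmp X f g"

definition conditional_generator ::
    "('o, 'm, 'z) dacat_scheme \<Rightarrow> 'o \<Rightarrow> 'o \<Rightarrow> 'm \<Rightarrow> 'm \<Rightarrow> bool" where
  "conditional_generator X B C P m \<longleftrightarrow>
     (let \<alpha> = cmp X (prj1 X B C) (cmp X P (inj1 X B C));
          \<beta> = cmp X (prj1 X B C) (cmp X P (inj2 X B C));
          \<delta> = cmp X (prj2 X B C) (cmp X P (inj2 X B C))
      in m \<in> Hom X B C \<and> cmp X m \<alpha> = dag X \<beta> \<and>
         dag_positive X C (hadd X \<delta> (hneg X (cmp X m \<beta>))))"

end

theory Submission
  imports Defs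
begin

text \<open>The map \<open>e = \<phi> \<phi>\<^sup>\<bullet>\<close> is a self-adjoint idempotent fixing \<open>\<phi>\<close>, and
  \<open>m \<phi>\<^sup>\<dagger> = \<psi>\<^sup>\<dagger> e\<^sup>\<dagger> = \<psi>\<^sup>\<dagger> e\<close>. The entries of \<open>[\<phi> \<psi>]\<^sup>\<dagger> [\<phi> \<psi>]\<close> are
  \<open>\<alpha> = \<phi>\<^sup>\<dagger>\<phi>\<close>, \<open>\<beta> = \<phi>\<^sup>\<dagger>\<psi>\<close>, \<open>\<delta> = \<psi>\<^sup>\<dagger>\<psi>\<close>; hence \<open>m \<alpha> = \<psi>\<^sup>\<dagger> e \<phi> = \<psi>\<^sup>\<dagger>\<phi> = \<beta>\<^sup>\<dagger>\<close>,
  and \<open>\<delta> - m \<beta> = \<psi>\<^sup>\<dagger>\<psi> - \<psi>\<^sup>\<dagger> e \<psi> = \<chi>\<^sup>\<dagger>\<chi>\<close> for \<open>\<chi> = \<psi> - e \<psi>\<close>, since \<open>e \<chi> = 0\<close>.\<close>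

definition dagger_projection :: "('o, 'm, 'z) dacat_scheme \<Rightarrow> 'o \<Rightarrow> 'm \<Rightarrow> bool" where
  "dagger_projection X A e \<longleftrightarrow> e \<in> Hom X A A \<and> dag X e = e \<and> cmp X e e = e"

locale dagger_additive =
  fixes X :: "('o, 'm, 'z) dacat_scheme"
  assumes dagger_additive_category: "dagger_additive_category X"
begin

abbreviation dcomp :: "'m \<Rightarrow> 'm \<Rightarrow> 'm"  (infixr \<open>\<cdot>\<close> 70)
  where "g \<cdot> f \<equiv> cmp X g f"
abbreviation dagger :: "'m \<Rightarrow> 'm"  (\<open>_\<^sup>\<dagger>\<close> [1000] 1000)
  where "f\<^sup>\<dagger> \<equiv> dag X f"
abbreviation dadd :: "'m \<Rightarrow> 'm \<Rightarrow> 'm"  (infixl \<open>\<^bold>+\<close> 65)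
  where "f \<^bold>+ g \<equiv> hadd X f g"
abbreviation dsub :: "'m \<Rightarrow> 'm \<Rightarrow> 'm"  (infixl \<open>\<^bold>-\<close> 65)
  where "f \<^bold>- g \<equiv> hadd X f (hneg X g)"

lemmas axioms = dagger_additive_category[unfolded dagger_additive_category_def]

lemma hom_obj: "f \<in> Hom X A B \<Longrightarrow> A \<in> Ob X \<and> B \<in> Ob X"
  using axioms by metis

lemma cmp_closed: "f \<in> Hom X A B \<Longrightarrow> g \<in> Hom X B C \<Longrightarrow> g \<cdot> f \<in> Hom X A C"
  using axioms by metis

lemma cmp_assoc:
  "f \<in> Hom X A B \<Longrightarrow> g \<in> Hom X B C \<Longrightarrow> h \<in> Hom X C E \<Longrightarrow> h \<cdot> (g \<cdot> f) = (h \<cdot> g) \<cdot> f"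
  using axioms by metis

lemma cmp_id_right: "f \<in> Hom X A B \<Longrightarrow> f \<cdot> idt X A = f"
  using axioms by metis

lemma dag_closed: "f \<in> Hom X A B \<Longrightarrow> f\<^sup>\<dagger> \<in> Hom X B A"
  using axioms by metis

lemma dag_dag: "f \<in> Hom X A B \<Longrightarrow> f\<^sup>\<dagger>\<^sup>\<dagger> = f"
  using axioms by metis

lemma dag_cmp: "f \<in> Hom X A B \<Longrightarrow> g \<in> Hom X B C \<Longrightarrow> (g \<cdot> f)\<^sup>\<dagger> = f\<^sup>\<dagger> \<cdot> g\<^sup>\<dagger>"
  using axioms by metis

lemma zero_closed: "A \<in> Ob X \<Longrightarrow> B \<in> Ob X \<Longrightarrow> hzero X A B \<in> Hom X A B"
  using axioms by metis

lemma hadd_closed: "f \<in> Hom X A B \<Longrightarrow> g \<in> Hom X A B \<Longrightarrow> f \<^bold>+ g \<in> Hom X A B"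
  using axioms by metis

lemma hadd_commute: "f \<in> Hom X A B \<Longrightarrow> g \<in> Hom X A B \<Longrightarrow> f \<^bold>+ g = g \<^bold>+ f"
  using axioms by metis

lemma hadd_assoc:
  "f \<in> Hom X A B \<Longrightarrow> g \<in> Hom X A B \<Longrightarrow> h \<in> Hom X A B \<Longrightarrow> f \<^bold>+ g \<^bold>+ h = f \<^bold>+ (g \<^bold>+ h)"
  using axioms by metis

lemma hadd_zero_right: "f \<in> Hom X A B \<Longrightarrow> f \<^bold>+ hzero X A B = f"
  using axioms by metis

lemma hneg_closed: "f \<in> Hom X A B \<Longrightarrow> hneg X f \<in> Hom X A B"
  using axioms by metis

lemma hadd_hneg_right: "f \<in> Hom X A B \<Longrightarrow> f \<^bold>- f = hzero X A B"
  using axioms by metis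

lemma cmp_hadd_left:
  "f \<in> Hom X A B \<Longrightarrow> g \<in> Hom X B C \<Longrightarrow> h \<in> Hom X B C \<Longrightarrow> (g \<^bold>+ h) \<cdot> f = g \<cdot> f \<^bold>+ h \<cdot> f"
  using axioms by metis

lemma cmp_hadd_right:
  "f \<in> Hom X A B \<Longrightarrow> g \<in> Hom X A B \<Longrightarrow> h \<in> Hom X B C \<Longrightarrow> h \<cdot> (f \<^bold>+ g) = h \<cdot> f \<^bold>+ h \<cdot> g"
  using axioms by metis

lemma dag_hadd: "f \<in> Hom X A B \<Longrightarrow> g \<in> Hom X A B \<Longrightarrow> (f \<^bold>+ g)\<^sup>\<dagger> = f\<^sup>\<dagger> \<^bold>+ g\<^sup>\<dagger>"
  using axioms by metis

lemma biproduct: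
  assumes "A \<in> Ob X" "B \<in> Ob X"
  shows "prj1 X A B \<in> Hom X (bprod X A B) A" "prj2 X A B \<in> Hom X (bprod X A B) B"
    and "inj1 X A B \<in> Hom X A (bprod X A B)" "inj2 X A B \<in> Hom X B (bprod X A B)"
    and "prj1 X A B \<cdot> inj1 X A B = idt X A" "prj2 X A B \<cdot> inj2 X A B = idt X B"
    and "prj1 X A B \<cdot> inj2 X A B = hzero X B A" "prj2 X A B \<cdot> inj1 X A B = hzero X A B"
  using assms axioms by metis+

lemma dag_inj:
  assumes "A \<in> Ob X" "B \<in> Ob X"
  shows "(inj1 X A B)\<^sup>\<dagger> = prj1 X A B" "(inj2 X A B)\<^sup>\<dagger> = prj2 X A B"
  using assms axioms dag_dag biproduct(1,2) by metis+

lemma hadd_zero_left: "f \<in> Hom X A B \<Longrightarrow> hzero X A B \<^bold>+ f = f"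
  using hadd_commute hadd_zero_right zero_closed hom_obj by metis

lemma hadd_left_cancel:
  assumes f: "f \<in> Hom X A B" and g: "g \<in> Hom X A B" and h: "h \<in> Hom X A B"
    and eq: "f \<^bold>+ g = f \<^bold>+ h"
  shows "g = h"
proof -
  have neg_f: "hneg X f \<in> Hom X A B"
    using f by (rule hneg_closed)
  have cancel: "hneg X f \<^bold>+ (f \<^bold>+ k) = k" if k: "k \<in> Hom X A B" for k
  proof -
    have "hneg X f \<^bold>+ (f \<^bold>+ k) = (f \<^bold>- f) \<^bold>+ k"
      using hadd_assoc[OF neg_f f k] hadd_commute[OF f neg_f] by simp
    also have "\<dots> = k"
      using hadd_hneg_right[OF f] hadd_zero_left[OF k] by simp
    finally show ?thesis .
  qed
  show ?thesis
    using cancel[OF g] cancel[OF h] eq by metis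
qed

lemma eq_zero_if_hadd_self: "x \<in> Hom X A B \<Longrightarrow> x \<^bold>+ x = x \<Longrightarrow> x = hzero X A B"
  using hadd_left_cancel zero_closed hadd_zero_right hom_obj by metis

lemma hneg_unique: "f \<in> Hom X A B \<Longrightarrow> g \<in> Hom X A B \<Longrightarrow> f \<^bold>+ g = hzero X A B \<Longrightarrow> g = hneg X f"
  using hadd_left_cancel hneg_closed hadd_hneg_right by metis

lemma hneg_zero: "A \<in> Ob X \<Longrightarrow> B \<in> Ob X \<Longrightarrow> hneg X (hzero X A B) = hzero X A B"
  using hneg_unique zero_closed hadd_zero_right by metis

lemma cmp_zero_right:
  assumes h: "h \<in> Hom X B C" and A: "A \<in> Ob X"
  shows "h \<cdot> hzero X A B = hzero X A C"
proof -
  have z: "hzero X A B \<in> Hom X A B"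
    using A h hom_obj zero_closed by blast
  show ?thesis
    using eq_zero_if_hadd_self[OF cmp_closed[OF z h]]
      cmp_hadd_right[OF z z h] hadd_zero_right[OF z] by simp
qed

lemma cmp_zero_left:
  assumes h: "h \<in> Hom X A B" and C: "C \<in> Ob X"
  shows "hzero X B C \<cdot> h = hzero X A C"
proof -
  have z: "hzero X B C \<in> Hom X B C"
    using C h hom_obj zero_closed by blast
  show ?thesis
    using eq_zero_if_hadd_self[OF cmp_closed[OF h z]]
      cmp_hadd_left[OF h z z] hadd_zero_right[OF z] by simp
qed

lemma dag_zero:
  assumes "A \<in> Ob X" "B \<in> Ob X"
  shows "(hzero X A B)\<^sup>\<dagger> = hzero X B A"
proof -
  have z: "hzero X A B \<in> Hom X A B"
    using assms by (rule zero_closed)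
  show ?thesis
    using eq_zero_if_hadd_self[OF dag_closed[OF z]] dag_hadd[OF z z] hadd_zero_right[OF z] by simp
qed

lemma cmp_hneg_right:
  assumes f: "f \<in> Hom X A B" and h: "h \<in> Hom X B C"
  shows "h \<cdot> hneg X f = hneg X (h \<cdot> f)"
proof (rule hneg_unique)
  show "h \<cdot> f \<^bold>+ h \<cdot> hneg X f = hzero X A C"
    using cmp_hadd_right[OF f hneg_closed[OF f] h] hadd_hneg_right[OF f] cmp_zero_right[OF h]
      hom_obj[OF f] by simp
qed (use f h cmp_closed hneg_closed in blast)+

lemma cmp_hneg_left:
  assumes f: "f \<in> Hom X A B" and h: "h \<in> Hom X B C"
  shows "hneg X h \<cdot> f = hneg X (h \<cdot> f)"
proof (rule hneg_unique)
  show "h \<cdot> f \<^bold>+ hneg X h \<cdot> f = hzero X A C"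
    using cmp_hadd_left[OF f h hneg_closed[OF h]] hadd_hneg_right[OF h] cmp_zero_left[OF f]
      hom_obj[OF h] by simp
qed (use f h cmp_closed hneg_closed in blast)+

lemma dag_hneg:
  assumes f: "f \<in> Hom X A B"
  shows "(hneg X f)\<^sup>\<dagger> = hneg X f\<^sup>\<dagger>"
proof (rule hneg_unique)
  show "f\<^sup>\<dagger> \<^bold>+ (hneg X f)\<^sup>\<dagger> = hzero X B A"
    using dag_hadd[OF f hneg_closed[OF f]] hadd_hneg_right[OF f] dag_zero hom_obj[OF f] by simp
qed (use f dag_closed hneg_closed in blast)+

lemma row_closed:
  assumes "f \<in> Hom X B E" "g \<in> Hom X C E"
  shows "row X B C f g \<in> Hom X (bprod X B C) E"
  unfolding row_def using assms biproduct(1,2) hom_obj cmp_closed hadd_closed by meson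

lemma row_cmp:
  assumes f: "f \<in> Hom X B E" and g: "g \<in> Hom X C E" and h: "h \<in> Hom X A (bprod X B C)"
  shows "row X B C f g \<cdot> h = f \<cdot> prj1 X B C \<cdot> h \<^bold>+ g \<cdot> prj2 X B C \<cdot> h"
proof -
  have "B \<in> Ob X" and "C \<in> Ob X"
    using f g hom_obj by blast+
  then have p1: "prj1 X B C \<in> Hom X (bprod X B C) B" and p2: "prj2 X B C \<in> Hom X (bprod X B C) C"
    by (rule biproduct)+
  show ?thesis
    unfolding row_def
    using cmp_hadd_left[OF h cmp_closed[OF p1 f] cmp_closed[OF p2 g]]
      cmp_assoc[OF h p1 f] cmp_assoc[OF h p2 g] by simp
qed

lemma row_inj1:
  assumes f: "f \<in> Hom X B E" and g: "g \<in> Hom X C E"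
  shows "row X B C f g \<cdot> inj1 X B C = f"
proof -
  have B: "B \<in> Ob X" and C: "C \<in> Ob X"
    using f g hom_obj by blast+
  show ?thesis
    using row_cmp[OF f g biproduct(3)[OF B C]] biproduct[OF B C]
      cmp_id_right[OF f] cmp_zero_right[OF g B] hadd_zero_right[OF f] by simp
qed

lemma row_inj2:
  assumes f: "f \<in> Hom X B E" and g: "g \<in> Hom X C E"
  shows "row X B C f g \<cdot> inj2 X B C = g"
proof -
  have B: "B \<in> Ob X" and C: "C \<in> Ob X"
    using f g hom_obj by blast+
  show ?thesis
    using row_cmp[OF f g biproduct(4)[OF B C]] biproduct[OF B C]
      cmp_id_right[OF g] cmp_zero_right[OF f C] hadd_zero_left[OF g] by simp
qed

lemma gram_entry:
  assumes R: "R \<in> Hom X E D" and i: "i \<in> Hom X B E" and j: "j \<in> Hom X C E"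
  shows "i\<^sup>\<dagger> \<cdot> (R\<^sup>\<dagger> \<cdot> R) \<cdot> j = (R \<cdot> i)\<^sup>\<dagger> \<cdot> (R \<cdot> j)"
  using cmp_assoc[OF j R dag_closed[OF R]] cmp_assoc[OF cmp_closed[OF j R] dag_closed[OF R] dag_closed[OF i]]
    dag_cmp[OF i R] by simp

lemma gram_row_entries:
  assumes f: "f \<in> Hom X B D" and g: "g \<in> Hom X C D"
  defines "P \<equiv> (row X B C f g)\<^sup>\<dagger> \<cdot> row X B C f g"
  shows "prj1 X B C \<cdot> P \<cdot> inj1 X B C = f\<^sup>\<dagger> \<cdot> f"
    and "prj1 X B C \<cdot> P \<cdot> inj2 X B C = f\<^sup>\<dagger> \<cdot> g"
    and "prj2 X B C \<cdot> P \<cdot> inj2 X B C = g\<^sup>\<dagger> \<cdot> g"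
proof -
  have B: "B \<in> Ob X" and C: "C \<in> Ob X"
    using f g hom_obj by blast+
  note entry = gram_entry[OF row_closed[OF f g], folded P_def]
  note inj = biproduct(3,4)[OF B C]
  show "prj1 X B C \<cdot> P \<cdot> inj1 X B C = f\<^sup>\<dagger> \<cdot> f"
    using entry[OF inj(1) inj(1)] dag_inj[OF B C] row_inj1[OF f g] by simp
  show "prj1 X B C \<cdot> P \<cdot> inj2 X B C = f\<^sup>\<dagger> \<cdot> g"
    using entry[OF inj(1) inj(2)] dag_inj[OF B C] row_inj1[OF f g] row_inj2[OF f g] by simp
  show "prj2 X B C \<cdot> P \<cdot> inj2 X B C = g\<^sup>\<dagger> \<cdot> g"
    using entry[OF inj(2) inj(2)] dag_inj[OF B C] row_inj2[OF f g] by simp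
qed

lemma mp13_inverse_dagger_projection:
  assumes f: "f \<in> Hom X A B" and "mp13_inverse X A B f g"
  shows "dagger_projection X B (f \<cdot> g)" and "(f \<cdot> g) \<cdot> f = f"
proof -
  have g: "g \<in> Hom X B A" and fgf: "f \<cdot> g \<cdot> f = f" and sa: "(f \<cdot> g)\<^sup>\<dagger> = f \<cdot> g"
    using assms(2) unfolding mp13_inverse_def by blast+
  show "(f \<cdot> g) \<cdot> f = f"
    using fgf cmp_assoc[OF f g f] by simp
  then have "(f \<cdot> g) \<cdot> (f \<cdot> g) = f \<cdot> g"
    using cmp_assoc[OF g f cmp_closed[OF g f]] by simp
  with sa show "dagger_projection X B (f \<cdot> g)"
    unfolding dagger_projection_def using cmp_closed[OF g f] by blast
qed

lemma dag_positive_diff_dagger_projection: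
  assumes e: "dagger_projection X D e" and g: "g \<in> Hom X C D"
  shows "dag_positive X C (g\<^sup>\<dagger> \<cdot> g \<^bold>- g\<^sup>\<dagger> \<cdot> e \<cdot> g)"
proof -
  have e_hom: "e \<in> Hom X D D" and e_sa: "e\<^sup>\<dagger> = e" and e_idem: "e \<cdot> e = e"
    using e unfolding dagger_projection_def by blast+
  have C: "C \<in> Ob X"
    using g hom_obj by blast
  have eg: "e \<cdot> g \<in> Hom X C D"
    using g e_hom by (rule cmp_closed)
  define \<chi> where "\<chi> = g \<^bold>- e \<cdot> g"
  have \<chi>: "\<chi> \<in> Hom X C D"
    unfolding \<chi>_def using g hneg_closed[OF eg] by (rule hadd_closed)
  have e_\<chi>: "e \<cdot> \<chi> = hzero X C D"
    unfolding \<chi>_def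
    using cmp_hadd_right[OF g hneg_closed[OF eg] e_hom] cmp_hneg_right[OF eg e_hom]
      cmp_assoc[OF g e_hom e_hom] e_idem hadd_hneg_right[OF eg] by simp
  have dag_\<chi>: "\<chi>\<^sup>\<dagger> = g\<^sup>\<dagger> \<^bold>- g\<^sup>\<dagger> \<cdot> e"
    unfolding \<chi>_def using dag_hadd[OF g hneg_closed[OF eg]] dag_hneg[OF eg] dag_cmp[OF g e_hom] e_sa
    by simp
  have "\<chi>\<^sup>\<dagger> \<cdot> \<chi> = g\<^sup>\<dagger> \<cdot> \<chi> \<^bold>- g\<^sup>\<dagger> \<cdot> e \<cdot> \<chi>"
    unfolding dag_\<chi>
    using cmp_hadd_left[OF \<chi> dag_closed[OF g] hneg_closed[OF cmp_closed[OF e_hom dag_closed[OF g]]]]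
      cmp_hneg_left[OF \<chi> cmp_closed[OF e_hom dag_closed[OF g]]] cmp_assoc[OF \<chi> e_hom dag_closed[OF g]]
    by simp
  also have "\<dots> = g\<^sup>\<dagger> \<cdot> \<chi>"
    using e_\<chi> cmp_zero_right[OF dag_closed[OF g] C] hneg_zero[OF C C]
      hadd_zero_right[OF cmp_closed[OF \<chi> dag_closed[OF g]]] by simp
  also have "\<dots> = g\<^sup>\<dagger> \<cdot> g \<^bold>- g\<^sup>\<dagger> \<cdot> e \<cdot> g"
    unfolding \<chi>_def
    using cmp_hadd_right[OF g hneg_closed[OF eg] dag_closed[OF g]] cmp_hneg_right[OF eg dag_closed[OF g]]
    by simp
  finally show ?thesis
    unfolding dag_positive_def using \<chi> by metis
qed

lemma conditional_generator_gram_row: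
  assumes f: "f \<in> Hom X B D" and g: "g \<in> Hom X C D" and f_inv: "mp13_inverse X B D f f_inv"
  shows "conditional_generator X B C ((row X B C f g)\<^sup>\<dagger> \<cdot> row X B C f g) (g\<^sup>\<dagger> \<cdot> f_inv\<^sup>\<dagger>)"
proof -
  define e where "e = f \<cdot> f_inv"
  define m where "m = g\<^sup>\<dagger> \<cdot> f_inv\<^sup>\<dagger>"
  have f_inv_hom: "f_inv \<in> Hom X D B"
    using f_inv unfolding mp13_inverse_def by blast
  have e: "dagger_projection X D e" and ef: "e \<cdot> f = f"
    unfolding e_def using mp13_inverse_dagger_projection[OF f f_inv] by blast+
  then have e_hom: "e \<in> Hom X D D" and e_sa: "e\<^sup>\<dagger> = e"
    unfolding dagger_projection_def by blast+
  have m: "m \<in> Hom X B C"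
    unfolding m_def using dag_closed[OF f_inv_hom] dag_closed[OF g] by (rule cmp_closed)
  have m_dag_f: "m \<cdot> f\<^sup>\<dagger> = g\<^sup>\<dagger> \<cdot> e"
    unfolding m_def
    using cmp_assoc[OF dag_closed[OF f] dag_closed[OF f_inv_hom] dag_closed[OF g]]
      dag_cmp[OF f_inv_hom f] e_sa e_def by simp
  have "m \<cdot> f\<^sup>\<dagger> \<cdot> f = (f\<^sup>\<dagger> \<cdot> g)\<^sup>\<dagger>"
    using cmp_assoc[OF f dag_closed[OF f] m] m_dag_f cmp_assoc[OF f e_hom dag_closed[OF g]] ef
      dag_cmp[OF g dag_closed[OF f]] dag_dag[OF f] by simp
  moreover have "m \<cdot> f\<^sup>\<dagger> \<cdot> g = g\<^sup>\<dagger> \<cdot> e \<cdot> g"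
    using cmp_assoc[OF g dag_closed[OF f] m] m_dag_f cmp_assoc[OF g e_hom dag_closed[OF g]] by simp
  ultimately show ?thesis
    unfolding conditional_generator_def Let_def gram_row_entries[OF f g] m_def[symmetric]
    using m dag_positive_diff_dagger_projection[OF e g] by simp
qed

end

text \<open>The entries \<open>\<alpha>, \<beta>, \<delta>\<close> and the positivity of the matrix are determined by its
  factorisation through \<open>[\<phi> \<psi>]\<close>.\<close>

theorem mainTheorem12:
  fixes X :: "('o, 'm, 'z) dacat_scheme"
  assumes "dagger_additive_category X"
    and "B \<in> Ob X" and "C \<in> Ob X" and "D \<in> Ob X"
    and "\<alpha> \<in> Hom X B B" and "\<beta> \<in> Hom X C B" and "\<delta> \<in> Hom X C C"
    and "dag_positive X (bprod X B C) (mat22 X B C B C \<alpha> \<beta> (dag X \<beta>) \<delta>)"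
    and "\<phi> \<in> Hom X B D" and "\<psi> \<in> Hom X C D"
    and "mat22 X B C B C \<alpha> \<beta> (dag X \<beta>) \<delta>
           = cmp X (dag X (row X B C \<phi> \<psi>)) (row X B C \<phi> \<psi>)"
    and "mp13_inverse X B D \<phi> \<phi>b"
  shows "conditional_generator X B C (mat22 X B C B C \<alpha> \<beta> (dag X \<beta>) \<delta>)
           (cmp X (dag X \<psi>) (dag X \<phi>b))"
proof -
  interpret dagger_additive X
    using assms(1) by unfold_locales
  show ?thesis
    unfolding assms(11) using assms(9,10,12) by (rule conditional_generator_gram_row)
qed

end
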